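(* Let $\mathcal{B}\subseteq\{1,2\}^3$ be a basic set with associated SNRE $F=\{F^{(a)},F^{(b)}\}$, sequences $(a_n),(b_n)$ and $S_2$-SFT $X^{\mathcal{B}}$. Suppose the symbol $1$ is a dominate symbol (i.e. $a_n\ge b_n$ for all $n\in\mathbb{N}$) and is essential (i.e. $a_n\ge2$ for some $n$). Then $F^{(a)}_1\neq y^2$. Furthermore: (1) if $F^{(a)}_1=x^2$, then $h(X^{\mathcal{B}})=\frac14\lim_{n\to\infty}\Big(\ln a_1+\sum_{j=1}^{n-1}2^{-j}\ln r^{(a)}_j\Big)$; (2) if $F^{(a)}_1=xy$ and $F^{(b)}_1=xy$, then $h(X^{\mathcal{B}})=\frac14\lim_{n\to\infty}\Big((\widehat v_1)^{[1]}+\sum_{j=1}^{n-1}2^{-j}(\ln\widehat r_j)^{[1]}\Big)$, where $\widehat v_1=R^{-1}v_1$, $\ln\widehat r_j=R^{-1}\ln r_j$; (3) if $F^{(a)}_1=xy$ and $F^{(b)}_1=y^2$, then $|B_n(X^{\mathcal{B}})|$ grows at most exponentially in $n$ (there is $c>0$ with $\ln|B_n(X^{\mathcal{B}})|\le cn$ for all $n$), and $h(X^{\mathcal{B}})=0$.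
   Context: $S_2$ is the free semigroup on two generators, identified with finite words over $\{1,2\}$ (root $\epsilon$). Alphabet $\mathcal{A}=\{1,2\}$; a basic set $\mathcal{B}\subseteq\mathcal{A}^3$ is a set of admissible 2-blocks $(i,i_1,i_2)$, $X^{\mathcal{B}}$ the associated $S_2$-SFT. $B_n(X^{\mathcal{B}})$ is the set of maps $u$ from words of length $\le n$ to $\mathcal{A}$ with $(u(w),u(w1),u(w2))\in\mathcal{B}$ for all words $w$ of length $\le n-1$; $a_n$, $b_n$ count those with $u(\epsilon)=1$, resp. $2$, so $|B_n(X^{\mathcal{B}})|=a_n+b_n$. The SNRE is $F^{(a)}(x,y)=\sum_{(1,i,j)\in\mathcal{B}}z_iz_j$, $F^{(b)}(x,y)=\sum_{(2,i,j)\in\mathcal{B}}z_iz_j$ ($z_1=x,z_2=y$), with $a_0=b_0=1$, $a_n=F^{(a)}(a_{n-1},b_{n-1})$, $b_n=F^{(b)}(a_{n-1},b_{n-1})$. Entropy: $h(X^{\mathcal{B}})=\limsup_{n}\frac{\ln(a_n+b_n)}{2^{n+1}-1}$ (known to be a limit). For $*\in\{a,b\}$, $F^{( * )}_1$ denotes the monomial (with coefficient $1$) among $x^2,xy,y^2$ occurring in $F^{( * )}$ with nonzero coefficient and with the highest power of $x$; and $r^{( * )}_j=F^{( * )}(a_j,b_j)/F^{( * )}_1(a_j,b_j)$. Let $v_1=(\ln a_1,\ln b_1)^T$, $\ln r_j=(\ln r^{(a)}_j,\ln r^{(b)}_j)^T$, $w^{[1]}$ the first entry of a vector $w$, and let $R$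 be an invertible $2\times2$ matrix with $R_{11}=1$ such that $\begin{pmatrix}1&1\\1&1\end{pmatrix}=R\begin{pmatrix}2&0\\0&0\end{pmatrix}R^{-1}$. *)

theory Defs
  imports "HOL-Analysis.Analysis"
begin

text \<open>Symbols are the naturals 1 and 2; a basic set is a set of triples (i, i1, i2).
  Words of S_2 are lists over {1,2}; the root is the empty list, w1 = w @ [1].\<close>

definition basic_set :: "(nat \<times> nat \<times> nat) set \<Rightarrow> bool" where
  "basic_set B \<longleftrightarrow> B \<subseteq> {1,2} \<times> {1,2} \<times> {1,2}"

definition words_le :: "nat \<Rightarrow> nat list set" where
  "words_le n = {w. set w \<subseteq> {1,2} \<and> length w \<le> n}"

text \<open>n-blocks: maps from words of length \<le> n to the alphabet (extended by 0 elsewhere,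
  so that they are determined by their values on words of length \<le> n).\<close>
definition blocks :: "(nat \<times> nat \<times> nat) set \<Rightarrow> nat \<Rightarrow> (nat list \<Rightarrow> nat) set" where
  "blocks B n = {u. (\<forall>w\<in>words_le n. u w \<in> {1,2}) \<and> (\<forall>w. w \<notin> words_le n \<longrightarrow> u w = 0) \<and>
      (\<forall>w. set w \<subseteq> {1,2} \<and> length w < n \<longrightarrow> (u w, u (w @ [1]), u (w @ [2])) \<in> B)}"

definition acount :: "(nat \<times> nat \<times> nat) set \<Rightarrow> nat \<Rightarrow> nat" where
  "acount B n = card {u \<in> blocks B n. u [] = 1}"

definition bcount :: "(nat \<times> nat \<times> nat) set \<Rightarrow> nat \<Rightarrow> nat" where
  "bcount B n = card {u \<in> blocks B n. u [] = 2}"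

definition entropy :: "(nat \<times> nat \<times> nat) set \<Rightarrow> ereal" where
  "entropy B = limsup (\<lambda>n. ereal (ln (real (card (blocks B n))) / (2 ^ (n + 1) - 1)))"

definition zvar :: "nat \<Rightarrow> real \<Rightarrow> real \<Rightarrow> real" where
  "zvar i x y = (if i = 1 then x else y)"

definition SNRE :: "(nat \<times> nat \<times> nat) set \<Rightarrow> nat \<Rightarrow> real \<Rightarrow> real \<Rightarrow> real" where
  "SNRE B k x y = (\<Sum>(i, j) \<in> {(i, j). (k, i, j) \<in> B}. zvar i x y * zvar j x y)"

text \<open>Monomials x^2, xy, y^2 are represented by their x-degree d \<in> {2,1,0}: x^d y^(2-d).\<close>
definition mono :: "nat \<Rightarrow> real \<Rightarrow> real \<Rightarrow> real" where
  "mono d x y = x ^ d * y ^ (2 - d)"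

definition xdeg :: "nat \<Rightarrow> nat \<Rightarrow> nat" where
  "xdeg i j = (if i = 1 then 1 else 0) + (if j = 1 then 1 else 0)"

definition SNRE_coeff :: "(nat \<times> nat \<times> nat) set \<Rightarrow> nat \<Rightarrow> nat \<Rightarrow> nat" where
  "SNRE_coeff B k d = card {(i, j). (k, i, j) \<in> B \<and> xdeg i j = d}"

definition F1 :: "(nat \<times> nat \<times> nat) set \<Rightarrow> nat \<Rightarrow> nat option" where
  "F1 B k = (let S = {d. d \<le> 2 \<and> SNRE_coeff B k d \<noteq> 0} in if S = {} then None else Some (Max S))"

definition rr :: "(nat \<times> nat \<times> nat) set \<Rightarrow> nat \<Rightarrow> nat \<Rightarrow> real" where
  "rr B k j = SNRE B k (acount B j) (bcount B j) /
     mono (the (F1 B k)) (acount B j) (bcount B j)"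

end

(*
  Splitting an (n+1)-block at the root into its two subtrees shows that the numbers of blocks
  with root 1 and root 2 obey a_(n+1) = F^(a)(a_n, b_n) and b_(n+1) = F^(b)(a_n, b_n).
  When b_n <= a_n, each F^(k)(a_n, b_n) lies between its leading monomial F^(k)_1(a_n, b_n) and
  four times it. Hence a logarithmic profile x_n (ln a_n if F^(a)_1 = x^2, the mean of ln a_n and
  ln b_n if both leading monomials are xy) satisfies 2 x_n <= x_(n+1) <= 2 x_n + C, so x_n / 2^n
  increases to a limit; ln |B_n| stays within bounded distance of x_n, and the series of the
  statement telescopes to x_n / 2^(n-1). If F^(a)_1 = y^2 then a_(n+1) = b_n^2 and monotonicity
  of F^(b) keep all counts at most 1, contradicting essentiality; if F^(b)_1 = y^2 then b_n = 1
  and a_n <= 4^n.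
*)
theory Submission
  imports Defs "HOL-Real_Asymp.Real_Asymp"
begin

section \<open>Counting blocks by their two subtrees\<close>

definition rooted_blocks :: "(nat \<times> nat \<times> nat) set \<Rightarrow> nat \<Rightarrow> nat \<Rightarrow> (nat list \<Rightarrow> nat) set" where
  "rooted_blocks B n k = {u \<in> blocks B n. u [] = k}"

definition subtree :: "(nat list \<Rightarrow> nat) \<Rightarrow> nat \<Rightarrow> nat list \<Rightarrow> nat" where
  "subtree u x = (\<lambda>w. u (x # w))"

definition graft :: "nat \<Rightarrow> (nat list \<Rightarrow> nat) \<Rightarrow> (nat list \<Rightarrow> nat) \<Rightarrow> nat list \<Rightarrow> nat" where
  "graft k u1 u2 =
     (\<lambda>w. case w of [] \<Rightarrow> k | x # w' \<Rightarrow> if x = 1 then u1 w' else if x = 2 then u2 w' else 0)"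

lemma words_le_Cons: "x # w \<in> words_le (Suc n) \<longleftrightarrow> x \<in> {1,2} \<and> w \<in> words_le n"
  by (auto simp: words_le_def)

lemma Nil_in_words_le [simp]: "[] \<in> words_le n"
  by (simp add: words_le_def)

lemma graft_simps [simp]:
  "graft k u1 u2 [] = k" "subtree (graft k u1 u2) 1 = u1" "subtree (graft k u1 u2) 2 = u2"
  by (simp_all add: subtree_def graft_def)

lemma blocks_admissible:
  assumes "u \<in> blocks B n" "set w \<subseteq> {1,2}" "length w < n"
  shows "(u w, u (w @ [1]), u (w @ [2])) \<in> B"
  using assms by (simp add: blocks_def)

lemma subtree_in_blocks:
  assumes u: "u \<in> blocks B (Suc n)" and x: "x \<in> {1,2}"
  shows "subtree u x \<in> blocks B n"
proof -
  have "(u (x # w), u (x # w @ [1]), u (x # w @ [2])) \<in> B"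
    if "set w \<subseteq> {1,2}" "length w < n" for w
    using blocks_admissible[OF u, of "x # w"] x that by simp
  then show ?thesis
    using u x by (auto simp: blocks_def subtree_def words_le_Cons)
qed

lemma graft_in_blocks:
  assumes k: "k \<in> {1,2}" and root: "(k, u1 [], u2 []) \<in> B"
    and u1: "u1 \<in> blocks B n" and u2: "u2 \<in> blocks B n"
  shows "graft k u1 u2 \<in> blocks B (Suc n)"
proof -
  let ?u = "graft k u1 u2"
  have "?u w \<in> {1,2}" if "w \<in> words_le (Suc n)" for w
    using that k u1 u2 by (cases w) (auto simp: graft_def blocks_def words_le_Cons)
  moreover have "?u w = 0" if "w \<notin> words_le (Suc n)" for w
    using that u1 u2 by (cases w) (auto simp: graft_def blocks_def words_le_Cons)
  moreover have "(?u w, ?u (w @ [1]), ?u (w @ [2])) \<in> B" if "set w \<subseteq> {1,2}" "length w < Suc n" for w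
    using that root u1 u2 by (cases w) (auto simp: graft_def blocks_def)
  ultimately show ?thesis
    by (simp add: blocks_def)
qed

lemma graft_subtrees:
  assumes "u \<in> blocks B (Suc n)"
  shows "graft (u []) (subtree u 1) (subtree u 2) = u"
proof
  fix w show "graft (u []) (subtree u 1) (subtree u 2) w = u w"
    using assms by (cases w) (auto simp: graft_def subtree_def blocks_def words_le_Cons)
qed

lemma bij_betw_rooted_blocks_Suc:
  assumes basic: "basic_set B"
  shows "bij_betw (\<lambda>u. ((u [1], u [2]), (subtree u 1, subtree u 2)))
           (rooted_blocks B (Suc n) k)
           (SIGMA ij:{(i, j). (k, i, j) \<in> B}. rooted_blocks B n (fst ij) \<times> rooted_blocks B n (snd ij))"
proof (rule bij_betw_byWitness[where f' = "\<lambda>(ij, u1, u2). graft k u1 u2"])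
  show "\<forall>u\<in>rooted_blocks B (Suc n) k. (\<lambda>(ij, u1, u2). graft k u1 u2) ((u [1], u [2]), subtree u 1, subtree u 2) = u"
    using graft_subtrees unfolding rooted_blocks_def by fastforce
  show "(\<lambda>u. ((u [1], u [2]), subtree u 1, subtree u 2)) ` rooted_blocks B (Suc n) k
      \<subseteq> (SIGMA ij:{(i, j). (k, i, j) \<in> B}. rooted_blocks B n (fst ij) \<times> rooted_blocks B n (snd ij))"
  proof (rule image_subsetI)
    fix u assume "u \<in> rooted_blocks B (Suc n) k"
    then have u: "u \<in> blocks B (Suc n)" "u [] = k"
      by (simp_all add: rooted_blocks_def)
    have "subtree u x \<in> rooted_blocks B n (u [x])" if "x \<in> {1,2}" for x
      using subtree_in_blocks[OF u(1) that] by (simp add: rooted_blocks_def subtree_def)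
    then show "((u [1], u [2]), subtree u 1, subtree u 2)
        \<in> (SIGMA ij:{(i, j). (k, i, j) \<in> B}. rooted_blocks B n (fst ij) \<times> rooted_blocks B n (snd ij))"
      using blocks_admissible[OF u(1), of "[]"] u(2) by simp
  qed
  show "(\<lambda>(ij, u1, u2). graft k u1 u2) `
      (SIGMA ij:{(i, j). (k, i, j) \<in> B}. rooted_blocks B n (fst ij) \<times> rooted_blocks B n (snd ij))
      \<subseteq> rooted_blocks B (Suc n) k"
  proof clarsimp
    fix i j u1 u2
    assume "(k, i, j) \<in> B" "u1 \<in> rooted_blocks B n i" "u2 \<in> rooted_blocks B n j"
    moreover from this(1) have "k \<in> {1,2}"
      using basic by (auto simp: basic_set_def)
    ultimately show "graft k u1 u2 \<in> rooted_blocks B (Suc n) k"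
      using graft_in_blocks by (auto simp: rooted_blocks_def)
  qed
qed (auto simp: rooted_blocks_def graft_def subtree_def)

lemma finite_children:
  assumes "basic_set B"
  shows "finite {(i, j). (k, i, j) \<in> B}"
  by (rule finite_subset[of _ "{1,2} \<times> {1,2}"]) (use assms in \<open>auto simp: basic_set_def\<close>)

lemma mem_rooted_blocks_0:
  "u \<in> rooted_blocks B 0 k \<longleftrightarrow> k \<in> {1,2} \<and> u = (\<lambda>w. if w = [] then k else 0)"
proof -
  have "words_le 0 = {[]}"
    by (auto simp: words_le_def)
  then show ?thesis
    unfolding rooted_blocks_def blocks_def by (auto simp: fun_eq_iff)
qed

lemma finite_rooted_blocks:
  assumes "basic_set B"
  shows "finite (rooted_blocks B n k)"
proof (induction n arbitrary: k)
  case 0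
  have "rooted_blocks B 0 k \<subseteq> {\<lambda>w. if w = [] then k else 0}"
    by (auto simp: mem_rooted_blocks_0)
  then show ?case
    using finite_subset by blast
next
  case (Suc n)
  show ?case
    using bij_betw_finite[OF bij_betw_rooted_blocks_Suc[OF assms]] finite_children[OF assms] Suc.IH
    by auto
qed

lemma card_rooted_blocks_Suc:
  assumes basic: "basic_set B"
  shows "real (card (rooted_blocks B (Suc n) k)) = SNRE B k (acount B n) (bcount B n)"
proof -
  have card_child: "real (card (rooted_blocks B n i)) = zvar i (acount B n) (bcount B n)" if "i \<in> {1,2}" for i
    using that by (auto simp: zvar_def acount_def bcount_def rooted_blocks_def)
  have "card (rooted_blocks B (Suc n) k)
      = card (SIGMA ij:{(i, j). (k, i, j) \<in> B}. rooted_blocks B n (fst ij) \<times> rooted_blocks B n (snd ij))"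
    using bij_betw_rooted_blocks_Suc[OF basic] by (rule bij_betw_same_card)
  also have "\<dots> = (\<Sum>(i, j)\<in>{(i, j). (k, i, j) \<in> B}. card (rooted_blocks B n i) * card (rooted_blocks B n j))"
    using finite_children[OF basic] finite_rooted_blocks[OF basic]
    by (simp add: card_SigmaI card_cartesian_product case_prod_beta)
  finally have "real (card (rooted_blocks B (Suc n) k))
      = (\<Sum>(i, j)\<in>{(i, j). (k, i, j) \<in> B}. real (card (rooted_blocks B n i)) * real (card (rooted_blocks B n j)))"
    by (simp add: case_prod_beta)
  also have "\<dots> = SNRE B k (acount B n) (bcount B n)"
    unfolding SNRE_def using basic
    by (intro sum.cong refl) (auto simp: card_child basic_set_def)
  finally show ?thesis .
qed

lemma acount_Suc: "basic_set B \<Longrightarrow> real (acount B (Suc n)) = SNRE B 1 (acount B n) (bcount B n)"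
  and bcount_Suc: "basic_set B \<Longrightarrow> real (bcount B (Suc n)) = SNRE B 2 (acount B n) (bcount B n)"
  using card_rooted_blocks_Suc[of B n 1] card_rooted_blocks_Suc[of B n 2]
  by (simp_all add: acount_def bcount_def rooted_blocks_def)

lemma acount_0 [simp]: "acount B 0 = 1" and bcount_0 [simp]: "bcount B 0 = 1"
proof -
  have "rooted_blocks B 0 k = {\<lambda>w. if w = [] then k else 0}" if "k \<in> {1,2}" for k
    using that by (auto simp: mem_rooted_blocks_0)
  then show "acount B 0 = 1" "bcount B 0 = 1"
    unfolding acount_def bcount_def rooted_blocks_def[symmetric] by simp_all
qed

lemma card_blocks:
  assumes "basic_set B"
  shows "card (blocks B n) = acount B n + bcount B n"
proof -
  have split: "blocks B n = rooted_blocks B n 1 \<union> rooted_blocks B n 2"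
    by (auto simp: rooted_blocks_def blocks_def)
  have "card (blocks B n) = card (rooted_blocks B n 1) + card (rooted_blocks B n 2)"
    unfolding split
    by (rule card_Un_disjoint[OF finite_rooted_blocks[OF assms] finite_rooted_blocks[OF assms]])
      (auto simp: rooted_blocks_def)
  then show ?thesis
    by (simp add: acount_def bcount_def rooted_blocks_def)
qed

section \<open>The SNRE and its leading monomial\<close>

lemma SNRE_explicit:
  assumes "basic_set B"
  shows "SNRE B k x y = (if (k,1,1) \<in> B then x * x else 0) + (if (k,1,2) \<in> B then x * y else 0)
     + (if (k,2,1) \<in> B then y * x else 0) + (if (k,2,2) \<in> B then y * y else 0)"
proof -
  have children: "{(i, j). (k, i, j) \<in> B} = {ij \<in> {1,2} \<times> {1,2}. (k, fst ij, snd ij) \<in> B}"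
    using assms by (auto simp: basic_set_def)
  have "SNRE B k x y = (\<Sum>ij\<in>{(i, j). (k, i, j) \<in> B}. zvar (fst ij) x y * zvar (snd ij) x y)"
    by (simp add: SNRE_def case_prod_beta)
  also have "\<dots> = (\<Sum>ij\<in>{1,2} \<times> {1,2}.
      if (k, fst ij, snd ij) \<in> B then zvar (fst ij) x y * zvar (snd ij) x y else 0)"
    unfolding children by (rule sum.inter_filter) simp
  also have "{1,2} \<times> {1,2} = {(1::nat, 1::nat), (1, 2), (2, 1), (2, 2)}"
    by auto
  finally show ?thesis
    by (simp add: zvar_def)
qed

lemma SNRE_mono:
  assumes "0 \<le> x" "x \<le> x'" "0 \<le> y" "y \<le> y'"
  shows "SNRE B k x y \<le> SNRE B k x' y'"
  unfolding SNRE_def using assms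
  by (intro sum_mono) (auto simp: zvar_def intro: mult_mono)

lemma F1_explicit:
  assumes "basic_set B"
  shows "F1 B k = (if (k,1,1) \<in> B then Some 2 else if (k,1,2) \<in> B \<or> (k,2,1) \<in> B then Some 1
     else if (k,2,2) \<in> B then Some 0 else None)"
proof -
  define P2 P1 P0 where "P2 \<longleftrightarrow> (k,1,1) \<in> B" and "P1 \<longleftrightarrow> (k,1,2) \<in> B \<or> (k,2,1) \<in> B"
    and "P0 \<longleftrightarrow> (k,2,2) \<in> B"
  have coeff: "SNRE_coeff B k d \<noteq> 0 \<longleftrightarrow> (P2 \<and> d = 2) \<or> (P1 \<and> d = 1) \<or> (P0 \<and> d = 0)" for d
  proof -
    have "finite {(i, j). (k, i, j) \<in> B \<and> xdeg i j = d}"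
      by (rule finite_subset[OF _ finite_children[OF assms, of k]]) auto
    then have "SNRE_coeff B k d \<noteq> 0 \<longleftrightarrow> (\<exists>i j. (k, i, j) \<in> B \<and> xdeg i j = d)"
      by (auto simp: SNRE_coeff_def)
    also have "\<dots> \<longleftrightarrow> (\<exists>i\<in>{1,2}. \<exists>j\<in>{1,2}. (k, i, j) \<in> B \<and> xdeg i j = d)"
      using assms by (auto simp: basic_set_def)
    also have "\<dots> \<longleftrightarrow> (P2 \<and> d = 2) \<or> (P1 \<and> d = 1) \<or> (P0 \<and> d = 0)"
      by (auto simp: xdeg_def P2_def P1_def P0_def)
    finally show ?thesis .
  qed
  have "{d. d \<le> 2 \<and> SNRE_coeff B k d \<noteq> 0}
      = (if P2 then {2} else {}) \<union> (if P1 then {1} else {}) \<union> (if P0 then {0} else {})"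
    unfolding coeff by auto
  then show ?thesis
    unfolding F1_def Let_def P2_def[symmetric] P1_def[symmetric] P0_def[symmetric]
    by (cases P2; cases P1; cases P0) auto
qed

lemma F1_SomeE:
  assumes "basic_set B" "F1 B k = Some d"
  obtains "d = 2" "(k,1,1) \<in> B"
    | "d = 1" "(k,1,1) \<notin> B" "(k,1,2) \<in> B \<or> (k,2,1) \<in> B"
    | "d = 0" "(k,1,1) \<notin> B" "(k,1,2) \<notin> B" "(k,2,1) \<notin> B" "(k,2,2) \<in> B"
  using assms by (auto simp: F1_explicit split: if_splits)

lemma SNRE_ge_term:
  assumes "basic_set B" "(k, i, j) \<in> B" "0 \<le> x" "0 \<le> y"
  shows "zvar i x y * zvar j x y \<le> SNRE B k x y"
proof -
  have "(\<lambda>(i, j). zvar i x y * zvar j x y) (i, j)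
      \<le> (\<Sum>(i, j)\<in>{(i, j). (k, i, j) \<in> B}. zvar i x y * zvar j x y)"
    by (rule member_le_sum) (use assms finite_children[OF assms(1)] in \<open>auto simp: zvar_def\<close>)
  then show ?thesis
    by (simp add: SNRE_def)
qed

lemma SNRE_le_four_times:
  assumes basic: "basic_set B" and "0 \<le> M"
    and term_le: "\<And>i j. (k, i, j) \<in> B \<Longrightarrow> zvar i x y * zvar j x y \<le> M"
  shows "SNRE B k x y \<le> 4 * M"
proof -
  have "card {(i, j). (k, i, j) \<in> B} \<le> card ({1,2} \<times> {1,2} :: (nat \<times> nat) set)"
    using basic by (intro card_mono) (auto simp: basic_set_def)
  then have card_le_4: "card {(i, j). (k, i, j) \<in> B} \<le> 4"
    by (simp add: card_cartesian_product)
  have "SNRE B k x y \<le> card {(i, j). (k, i, j) \<in> B} * M"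
    unfolding SNRE_def using term_le by (intro sum_bounded_above) auto
  also have "\<dots> \<le> 4 * M"
    using card_le_4 \<open>0 \<le> M\<close> by (intro mult_right_mono) auto
  finally show ?thesis .
qed

lemma SNRE_ge_leading_monomial:
  assumes basic: "basic_set B" and F: "F1 B k = Some d" and "0 \<le> x" "0 \<le> y"
  shows "mono d x y \<le> SNRE B k x y"
  using F1_SomeE[OF basic F]
proof cases
  case 1
  then show ?thesis
    using SNRE_ge_term[OF basic _ assms(3,4), of k 1 1] by (simp add: mono_def zvar_def power2_eq_square)
next
  case 2
  then show ?thesis
    using SNRE_ge_term[OF basic _ assms(3,4), of k 1 2] SNRE_ge_term[OF basic _ assms(3,4), of k 2 1]
    by (auto simp: mono_def zvar_def mult.commute)
next
  case 3
  then show ?thesis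
    using SNRE_ge_term[OF basic _ assms(3,4), of k 2 2] by (simp add: mono_def zvar_def power2_eq_square)
qed

lemma SNRE_le_leading_monomial:
  assumes basic: "basic_set B" and F: "F1 B k = Some d" and "0 \<le> y" "y \<le> x"
  shows "SNRE B k x y \<le> 4 * mono d x y"
proof (rule SNRE_le_four_times[OF basic])
  show "0 \<le> mono d x y"
    using assms(3,4) by (simp add: mono_def)
  fix i j assume ij: "(k, i, j) \<in> B"
  have zvar: "0 \<le> zvar i x y" "zvar i x y \<le> x" "0 \<le> zvar j x y" "zvar j x y \<le> x"
    using assms(3,4) by (auto simp: zvar_def)
  from F1_SomeE[OF basic F] show "zvar i x y * zvar j x y \<le> mono d x y"
  proof cases
    case 1
    then show ?thesis
      using zvar by (simp add: mono_def power2_eq_square mult_mono)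
  next
    case 2
    then have "i \<noteq> 1 \<or> j \<noteq> 1"
      using ij by auto
    then show ?thesis
      using 2 zvar assms(3) by (auto simp: mono_def zvar_def mult_left_mono mult_right_mono)
  next
    case 3
    then have "i = 2 \<and> j = 2"
      using ij basic by (auto simp: basic_set_def)
    then show ?thesis
      using 3 by (simp add: mono_def zvar_def power2_eq_square)
  qed
qed

lemma SNRE_eq_y_squared:
  assumes basic: "basic_set B" and F: "F1 B k = Some 0"
  shows "SNRE B k x y = y\<^sup>2"
  using F1_SomeE[OF basic F] by cases (simp_all add: SNRE_explicit[OF basic] power2_eq_square)

section \<open>Entropy from a doubling profile\<close>

lemma entropy_eq_half_limit:
  assumes "(\<lambda>n. ln (real (card (blocks B n))) / 2 ^ n) \<longlonglongrightarrow> Q"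
  shows "entropy B = ereal (Q / 2)"
proof -
  have "(\<lambda>n::nat. (2::real) ^ n / (2 ^ (n + 1) - 1)) \<longlonglongrightarrow> 1 / 2"
    by real_asymp
  with assms have "(\<lambda>n. ln (real (card (blocks B n))) / 2 ^ n * (2 ^ n / (2 ^ (n + 1) - 1))) \<longlonglongrightarrow> Q * (1 / 2)"
    by (rule tendsto_mult)
  then have "(\<lambda>n. ereal (ln (real (card (blocks B n))) / (2 ^ (n + 1) - 1))) \<longlonglongrightarrow> ereal (Q / 2)"
    by (simp add: tendsto_ereal)
  then show ?thesis
    unfolding entropy_def by (intro lim_imp_Limsup) auto
qed

lemma doubling_profile_convergent:
  fixes x :: "nat \<Rightarrow> real"
  assumes lower: "\<And>n. 2 * x n \<le> x (Suc n)" and upper: "\<And>n. x (Suc n) \<le> 2 * x n + C"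
  shows "convergent (\<lambda>n. x n / 2 ^ n)"
proof -
  have "incseq (\<lambda>n. x n / 2 ^ n)"
  proof (rule incseq_SucI)
    fix n
    have "x n / 2 ^ n = 2 * x n / 2 ^ Suc n"
      by simp
    also have "\<dots> \<le> x (Suc n) / 2 ^ Suc n"
      by (rule divide_right_mono[OF lower]) simp
    finally show "x n / 2 ^ n \<le> x (Suc n) / 2 ^ Suc n" .
  qed
  moreover have "x n \<le> 2 ^ n * (x 0 + C) - C" for n
  proof (induction n)
    case (Suc n)
    then show ?case
      using upper[of n] by (simp add: algebra_simps)
  qed simp
  then have "\<forall>n. x n / 2 ^ n \<le> x 0 + C"
    using lower[of 0] upper[of 0] by (simp add: pos_divide_le_eq algebra_simps) (smt (verit))
  ultimately obtain L where "(\<lambda>n. x n / 2 ^ n) \<longlonglongrightarrow> L"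
    using incseq_convergent by blast
  then show ?thesis
    by (rule convergentI)
qed

lemma halving_series_telescope:
  fixes x :: "nat \<Rightarrow> real"
  shows "x 1 + (\<Sum>j=1..<Suc n. (1/2) ^ j * (x (Suc j) - 2 * x j)) = x (Suc n) / 2 ^ n"
proof (induction n)
  case (Suc n)
  have "x 1 + (\<Sum>j=1..<Suc (Suc n). (1/2) ^ j * (x (Suc j) - 2 * x j))
      = (x 1 + (\<Sum>j=1..<Suc n. (1/2) ^ j * (x (Suc j) - 2 * x j)))
        + (1/2) ^ Suc n * (x (Suc (Suc n)) - 2 * x (Suc n))"
    by (subst sum.atLeastLessThan_Suc) simp_all
  also have "\<dots> = x (Suc (Suc n)) / 2 ^ Suc n"
    unfolding Suc.IH by (simp add: power_one_over field_simps)
  finally show ?case .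
qed simp

lemma entropy_eq_quarter_halving_series:
  fixes x :: "nat \<Rightarrow> real"
  assumes lower: "\<And>n. 2 * x n \<le> x (Suc n)" and upper: "\<And>n. x (Suc n) \<le> 2 * x n + C"
    and blocks_lower: "\<And>n. x n \<le> ln (real (card (blocks B n)))"
    and blocks_upper: "\<And>n. ln (real (card (blocks B n))) \<le> x n + D"
  shows "\<exists>L. (\<lambda>n. x 1 + (\<Sum>j=1..<n. (1/2) ^ j * (x (Suc j) - 2 * x j))) \<longlonglongrightarrow> L
           \<and> entropy B = ereal (L / 4)"
proof -
  obtain Q where Q: "(\<lambda>n. x n / 2 ^ n) \<longlonglongrightarrow> Q"
    using doubling_profile_convergent[of x, OF lower upper] by (auto simp: convergent_def)
  have "(\<lambda>n. D / 2 ^ n) \<longlonglongrightarrow> 0"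
    by (rule LIMSEQ_divide_realpow_zero) simp
  from tendsto_add[OF Q this] have Q_upper: "(\<lambda>n. (x n + D) / 2 ^ n) \<longlonglongrightarrow> Q"
    by (simp add: add_divide_distrib)
  have "(\<lambda>n. ln (real (card (blocks B n))) / 2 ^ n) \<longlonglongrightarrow> Q"
  proof (rule tendsto_sandwich[OF _ _ Q Q_upper])
    show "\<forall>\<^sub>F n in sequentially. x n / 2 ^ n \<le> ln (real (card (blocks B n))) / 2 ^ n"
      using blocks_lower by (intro always_eventually allI divide_right_mono) simp_all
    show "\<forall>\<^sub>F n in sequentially. ln (real (card (blocks B n))) / 2 ^ n \<le> (x n + D) / 2 ^ n"
      using blocks_upper by (intro always_eventually allI divide_right_mono) simp_all
  qed
  then have "entropy B = ereal ((2 * Q) / 4)"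
    by (simp add: entropy_eq_half_limit)
  moreover have "(\<lambda>n. 2 * (x (Suc n) / 2 ^ Suc n)) \<longlonglongrightarrow> 2 * Q"
    using LIMSEQ_Suc[OF Q] by (rule tendsto_mult_left)
  then have "(\<lambda>n. x 1 + (\<Sum>j=1..<Suc n. (1/2) ^ j * (x (Suc j) - 2 * x j))) \<longlonglongrightarrow> 2 * Q"
    unfolding halving_series_telescope by simp
  then have "(\<lambda>n. x 1 + (\<Sum>j=1..<n. (1/2) ^ j * (x (Suc j) - 2 * x j))) \<longlonglongrightarrow> 2 * Q"
    by (rule LIMSEQ_imp_Suc)
  ultimately show ?thesis
    by (intro exI[of _ "2 * Q"] conjI)
qed

section \<open>The three cases of the leading monomials\<close>

lemma matrix_inv_first_row:
  fixes R :: "real^2^2"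
  assumes R_inv: "invertible R" and R11: "R $ 1 $ 1 = 1"
    and R_diag: "((\<chi> i j. 1) :: real^2^2) = R ** ((\<chi> i j. if i = 1 \<and> j = 1 then 2 else 0) :: real^2^2) ** matrix_inv R"
  shows "(matrix_inv R *v v) $ 1 = (v $ 1 + v $ 2) / 2"
proof -
  define M where "M = matrix_inv R"
  define D where "D = ((\<chi> i j. if i = 1 \<and> j = 1 then 2 else 0) :: real^2^2)"
  define J where "J = ((\<chi> i j. 1) :: real^2^2)"
  have inv: "R ** M = mat 1 \<and> M ** R = mat 1"
    unfolding M_def matrix_inv_def using R_inv unfolding invertible_def by (rule someI_ex)
  have J: "J = R ** D ** M"
    using R_diag unfolding J_def D_def M_def .
  have JR: "J ** R = R ** D"
    by (metis J inv matrix_mul_assoc matrix_mul_rid)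
  have MJ: "M ** J = D ** M"
    by (metis J inv matrix_mul_assoc matrix_mul_lid)
  \<comment> \<open>So the first column of R is (1,1), and the first row of M has equal entries, summing to 1.\<close>
  have "R $ 2 $ 1 = 1"
    using arg_cong[OF JR, of "\<lambda>A. A $ 2 $ 1"] R11 by (simp add: matrix_matrix_mult_def sum_2 J_def D_def)
  moreover have "M $ 1 $ 1 = M $ 1 $ 2"
    using arg_cong[OF MJ, of "\<lambda>A. A $ 1 $ 1"] arg_cong[OF MJ, of "\<lambda>A. A $ 1 $ 2"]
    by (simp add: matrix_matrix_mult_def sum_2 J_def D_def)
  moreover have "M $ 1 $ 1 * R $ 1 $ 1 + M $ 1 $ 2 * R $ 2 $ 1 = 1"
    using arg_cong[OF conjunct2[OF inv], of "\<lambda>A. A $ 1 $ 1"] by (simp add: matrix_matrix_mult_def sum_2 mat_def)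
  ultimately have "M $ 1 $ 1 = 1 / 2" "M $ 1 $ 2 = 1 / 2"
    using R11 by simp_all
  then show ?thesis
    unfolding M_def[symmetric] by (simp add: matrix_vector_mult_def sum_2 field_simps)
qed

lemma ln_card_blocks_bounds:
  assumes "basic_set B" "bcount B n \<le> acount B n" "1 \<le> acount B n"
  shows "ln (real (acount B n)) \<le> ln (real (card (blocks B n)))"
    and "ln (real (card (blocks B n))) \<le> ln 2 + ln (real (acount B n))"
proof -
  have pos: "0 < real (acount B n)"
    using assms(3) by simp
  have card: "real (card (blocks B n)) = real (acount B n) + real (bcount B n)"
    using assms(1) by (simp add: card_blocks)
  show "ln (real (acount B n)) \<le> ln (real (card (blocks B n)))"
    unfolding card using pos by simp
  have "ln (real (card (blocks B n))) \<le> ln (2 * real (acount B n))"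
    unfolding card using pos assms(2) by simp
  also have "\<dots> = ln 2 + ln (real (acount B n))"
    using pos by (simp add: ln_mult)
  finally show "ln (real (card (blocks B n))) \<le> ln 2 + ln (real (acount B n))" .
qed

lemma dominant_essential_F1_ne_y_squared:
  assumes basic: "basic_set B"
    and dominate: "\<forall>n. acount B n \<ge> bcount B n"
    and essential: "\<exists>n. acount B n \<ge> 2"
  shows "F1 B 1 \<noteq> Some 0"
proof
  assume F: "F1 B 1 = Some 0"
  define a b where "a n = real (acount B n)" and "b n = real (bcount B n)" for n
  have a_Suc: "a (Suc n) = b n ^ 2" for n
    using acount_Suc[OF basic] SNRE_eq_y_squared[OF basic F] by (simp add: a_def b_def)
  have b_Suc: "b (Suc n) = SNRE B 2 (a n) (b n)" for n
    using bcount_Suc[OF basic] by (simp add: a_def b_def)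
  have "b 1 \<le> a 1"
    using dominate by (simp add: a_def b_def)
  also have "a 1 = 1"
    using a_Suc[of 0] by (simp add: b_def)
  finally have b1: "SNRE B 2 1 1 \<le> 1"
    using b_Suc[of 0] by (simp add: a_def b_def)
  \<comment> \<open>F^(b) is monotone, so all counts stay below F^(b)(1,1) = b_1 \<le> 1.\<close>
  have "a n \<le> 1 \<and> b n \<le> 1" for n
  proof (induction n)
    case (Suc n)
    have "0 \<le> a n" "0 \<le> b n"
      by (simp_all add: a_def b_def)
    with Suc have "a (Suc n) \<le> 1" "b (Suc n) \<le> SNRE B 2 1 1"
      by (simp_all add: a_Suc b_Suc SNRE_mono power_le_one)
    with b1 show ?case
      by simp
  qed (simp add: a_def b_def)
  then have "acount B n \<le> 1" for n
    by (simp add: a_def)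
  with essential show False
    by (meson le_trans numeral_le_one_iff semiring_norm(69))
qed

lemma entropy_leading_x_squared:
  assumes basic: "basic_set B"
    and dominate: "\<forall>n. acount B n \<ge> bcount B n"
    and F: "F1 B 1 = Some 2"
  shows "\<exists>L. (\<lambda>n. ln (real (acount B 1)) + (\<Sum>j=1..<n. (1/2) ^ j * ln (rr B 1 j))) \<longlonglongrightarrow> L
           \<and> entropy B = ereal (L / 4)"
proof -
  define a b where "a n = real (acount B n)" and "b n = real (bcount B n)" for n
  define x where "x n = ln (a n)" for n
  have b_le_a: "0 \<le> b n" "b n \<le> a n" for n
    using dominate by (simp_all add: a_def b_def)
  have a_Suc: "a n ^ 2 \<le> a (Suc n)" "a (Suc n) \<le> 4 * a n ^ 2" for n
    using SNRE_ge_leading_monomial[OF basic F, of "a n" "b n"] SNRE_le_leading_monomial[OF basic F b_le_a]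
    by (simp_all add: a_def b_def acount_Suc[OF basic] mono_def)
  have a_ge_1: "1 \<le> a n" for n
  proof (induction n)
    case (Suc n)
    then show ?case
      using a_Suc(1)[of n] one_le_power[of "a n" 2] by linarith
  qed (simp add: a_def)
  have lower: "2 * x n \<le> x (Suc n)" and upper: "x (Suc n) \<le> 2 * x n + ln 4" for n
  proof -
    have "ln (a n ^ 2) \<le> x (Suc n)" "x (Suc n) \<le> ln (4 * a n ^ 2)"
      using a_Suc[of n] a_ge_1[of n] a_ge_1[of "Suc n"] by (simp_all add: x_def)
    then show "2 * x n \<le> x (Suc n)" "x (Suc n) \<le> 2 * x n + ln 4"
      using a_ge_1[of n] by (simp_all add: x_def ln_mult ln_realpow)
  qed
  have "x n \<le> ln (real (card (blocks B n)))" "ln (real (card (blocks B n))) \<le> x n + ln 2" for n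
    using ln_card_blocks_bounds[OF basic, of n] dominate a_ge_1[of n] by (auto simp: x_def a_def)
  then obtain L where L: "(\<lambda>n. x 1 + (\<Sum>j=1..<n. (1/2) ^ j * (x (Suc j) - 2 * x j))) \<longlonglongrightarrow> L"
    and entropy: "entropy B = ereal (L / 4)"
    using entropy_eq_quarter_halving_series[of x "ln 4", OF lower upper] by blast
  have "ln (rr B 1 j) = x (Suc j) - 2 * x j" for j
  proof -
    have "rr B 1 j = a (Suc j) / a j ^ 2"
      unfolding rr_def F by (simp add: mono_def a_def b_def acount_Suc[OF basic])
    then show ?thesis
      using a_ge_1[of j] a_ge_1[of "Suc j"] by (simp add: x_def ln_div ln_realpow)
  qed
  moreover have "ln (real (acount B 1)) = x 1"
    by (simp add: x_def a_def)
  ultimately show ?thesis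
    using L entropy by (intro exI[of _ L] conjI) simp_all
qed

lemma entropy_leading_xy_xy:
  fixes R :: "real^2^2"
  assumes basic: "basic_set B"
    and dominate: "\<forall>n. acount B n \<ge> bcount B n"
    and R_inv: "invertible R" and R11: "R $ 1 $ 1 = 1"
    and R_diag: "((\<chi> i j. 1) :: real^2^2) = R ** ((\<chi> i j. if i = 1 \<and> j = 1 then 2 else 0) :: real^2^2) ** matrix_inv R"
    and Fa: "F1 B 1 = Some 1" and Fb: "F1 B 2 = Some 1"
  shows "\<exists>L. (\<lambda>n. (matrix_inv R *v (\<chi> i. if i = 1 then ln (real (acount B 1)) else ln (real (bcount B 1)))) $ 1
                 + (\<Sum>j=1..<n. (1/2) ^ j *
                     (matrix_inv R *v (\<chi> i. if i = 1 then ln (rr B 1 j) else ln (rr B 2 j))) $ 1)) \<longlonglongrightarrow> L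
              \<and> entropy B = ereal (L / 4)"
proof -
  define a b where "a n = real (acount B n)" and "b n = real (bcount B n)" for n
  define x where "x n = (ln (a n) + ln (b n)) / 2" for n
  have b_le_a: "0 \<le> b n" "b n \<le> a n" for n
    using dominate by (simp_all add: a_def b_def)
  have a_Suc: "a n * b n \<le> a (Suc n)" "a (Suc n) \<le> 4 * (a n * b n)"
    and b_Suc: "a n * b n \<le> b (Suc n)" "b (Suc n) \<le> 4 * (a n * b n)" for n
    using SNRE_ge_leading_monomial[OF basic Fa, of "a n" "b n"] SNRE_le_leading_monomial[OF basic Fa b_le_a]
      SNRE_ge_leading_monomial[OF basic Fb, of "a n" "b n"] SNRE_le_leading_monomial[OF basic Fb b_le_a]
    by (simp_all add: a_def b_def acount_Suc[OF basic] bcount_Suc[OF basic] mono_def)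
  have b_ge_1: "1 \<le> b n" for n
  proof (induction n)
    case (Suc n)
    then have "1 * 1 \<le> a n * b n"
      using b_le_a(2)[of n] by (intro mult_mono) auto
    then show ?case
      using b_Suc(1)[of n] by linarith
  qed (simp add: b_def)
  have a_ge_1: "1 \<le> a n" for n
    using b_ge_1[of n] b_le_a(2)[of n] by linarith
  \<comment> \<open>a_n \<le> 4 b_n keeps the two logarithms, hence ln |B_n| and x_n, within bounded distance.\<close>
  have a_le_4b: "a n \<le> 4 * b n" for n
  proof (cases n)
    case (Suc m)
    then show ?thesis
      using a_Suc(2)[of m] b_Suc(1)[of m] by simp
  qed (simp add: a_def b_def)
  have lower: "2 * x n \<le> x (Suc n)" and upper: "x (Suc n) \<le> 2 * x n + ln 4" for n
  proof -
    have pos: "0 < a n * b n" "0 < a (Suc n)" "0 < b (Suc n)"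
      using a_ge_1 b_ge_1 by (simp_all add: order_less_le_trans[OF zero_less_one])
    have "ln (a n * b n) \<le> ln (a (Suc n))" "ln (a (Suc n)) \<le> ln (4 * (a n * b n))"
      "ln (a n * b n) \<le> ln (b (Suc n))" "ln (b (Suc n)) \<le> ln (4 * (a n * b n))"
      using a_Suc[of n] b_Suc[of n] pos by simp_all
    then have "ln (a n) + ln (b n) \<le> ln (a (Suc n))" "ln (a (Suc n)) \<le> ln 4 + (ln (a n) + ln (b n))"
      "ln (a n) + ln (b n) \<le> ln (b (Suc n))" "ln (b (Suc n)) \<le> ln 4 + (ln (a n) + ln (b n))"
      using a_ge_1[of n] b_ge_1[of n] by (simp_all add: ln_mult)
    then show "2 * x n \<le> x (Suc n)" "x (Suc n) \<le> 2 * x n + ln 4"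
      by (simp_all add: x_def field_simps)
  qed
  have "x n \<le> ln (real (card (blocks B n)))" "ln (real (card (blocks B n))) \<le> x n + 2 * ln 2" for n
  proof -
    have "ln (b n) \<le> ln (a n)" "ln (a n) \<le> ln (4 * b n)"
      using b_le_a(2)[of n] a_le_4b[of n] b_ge_1[of n] by simp_all
    moreover have "ln (4 * b n) = ln 4 + ln (b n)"
      using b_ge_1[of n] by (simp add: ln_mult)
    moreover have "ln 4 = 2 * ln (2::real)"
      using ln_realpow[of 2 2] by simp
    moreover have "ln (a n) \<le> ln (real (card (blocks B n)))" "ln (real (card (blocks B n))) \<le> ln 2 + ln (a n)"
      using ln_card_blocks_bounds[OF basic, of n] dominate a_ge_1[of n] by (auto simp: a_def)
    ultimately show "x n \<le> ln (real (card (blocks B n)))" "ln (real (card (blocks B n))) \<le> x n + 2 * ln 2"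
      by (simp_all add: x_def field_simps)
  qed
  then obtain L where L: "(\<lambda>n. x 1 + (\<Sum>j=1..<n. (1/2) ^ j * (x (Suc j) - 2 * x j))) \<longlonglongrightarrow> L"
    and entropy: "entropy B = ereal (L / 4)"
    using entropy_eq_quarter_halving_series[of x "ln 4", OF lower upper] by blast
  have first_row: "(matrix_inv R *v (\<chi> i. if i = 1 then X else Y)) $ 1 = (X + Y) / 2" for X Y
    using matrix_inv_first_row[OF R_inv R11 R_diag] by simp
  have x1: "(ln (real (acount B 1)) + ln (real (bcount B 1))) / 2 = x 1"
    by (simp add: x_def a_def b_def)
  have rr: "(ln (rr B 1 j) + ln (rr B 2 j)) / 2 = x (Suc j) - 2 * x j" for j
  proof -
    have "rr B 1 j = a (Suc j) / (a j * b j)" "rr B 2 j = b (Suc j) / (a j * b j)"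
      unfolding rr_def Fa Fb by (simp_all add: mono_def a_def b_def acount_Suc[OF basic] bcount_Suc[OF basic])
    then have "ln (rr B 1 j) = ln (a (Suc j)) - (ln (a j) + ln (b j))"
      "ln (rr B 2 j) = ln (b (Suc j)) - (ln (a j) + ln (b j))"
      using a_ge_1[of j] a_ge_1[of "Suc j"] b_ge_1[of j] b_ge_1[of "Suc j"]
      by (simp_all add: ln_div ln_mult)
    then show ?thesis
      by (simp add: x_def field_simps)
  qed
  show ?thesis
    unfolding first_row x1 rr using L entropy by (intro exI[of _ L] conjI)
qed

lemma entropy_leading_xy_y_squared:
  assumes basic: "basic_set B"
    and Fa: "F1 B 1 = Some 1" and Fb: "F1 B 2 = Some 0"
  shows "(\<exists>c>0. \<forall>n\<ge>1. ln (real (card (blocks B n))) \<le> c * real n) \<and> entropy B = 0"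
proof -
  define a where "a n = real (acount B n)" for n
  have b_eq_1: "bcount B n = 1" for n
  proof (induction n)
    case (Suc n)
    then show ?case
      using bcount_Suc[OF basic, of n] SNRE_eq_y_squared[OF basic Fb] by simp
  qed simp
  have a_Suc: "a n \<le> a (Suc n)" "a (Suc n) \<le> 4 * a n" if "1 \<le> a n" for n
    using SNRE_ge_leading_monomial[OF basic Fa, of "a n" 1] SNRE_le_leading_monomial[OF basic Fa, of 1 "a n"] that
    by (simp_all add: a_def b_eq_1 acount_Suc[OF basic] mono_def)
  have a_bounds: "1 \<le> a n \<and> a n \<le> 4 ^ n" for n
  proof (induction n)
    case (Suc n)
    then show ?case
      using a_Suc[of n] by simp
  qed (simp add: a_def)
  have ln_card: "0 \<le> ln (real (card (blocks B n)))" "ln (real (card (blocks B n))) \<le> ln 2 + ln 4 * n" for n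
  proof -
    have card: "real (card (blocks B n)) = a n + 1"
      by (simp add: card_blocks[OF basic] a_def b_eq_1)
    have "ln (a n + 1) \<le> ln (2 * 4 ^ n)"
      using a_bounds[of n] by simp
    then show "0 \<le> ln (real (card (blocks B n)))" "ln (real (card (blocks B n))) \<le> ln 2 + ln 4 * n"
      unfolding card using a_bounds[of n] by (simp_all add: ln_mult ln_realpow mult.commute)
  qed
  have "\<forall>n\<ge>1. ln (real (card (blocks B n))) \<le> (ln 2 + ln 4) * real n"
  proof (intro allI impI)
    fix n :: nat assume "1 \<le> n"
    then have "ln (2::real) \<le> ln 2 * real n"
      by simp
    with ln_card(2)[of n] show "ln (real (card (blocks B n))) \<le> (ln 2 + ln 4) * real n"
      unfolding distrib_right by linarith
  qed
  moreover have "0 < ln (2::real) + ln 4"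
    by (intro add_pos_pos) simp_all
  moreover have "(\<lambda>n. ln (real (card (blocks B n))) / 2 ^ n) \<longlonglongrightarrow> 0"
  proof (rule tendsto_sandwich[OF _ _ tendsto_const])
    show "\<forall>\<^sub>F n in sequentially. 0 \<le> ln (real (card (blocks B n))) / 2 ^ n"
      using ln_card(1) by simp
    show "\<forall>\<^sub>F n in sequentially. ln (real (card (blocks B n))) / 2 ^ n \<le> (ln 2 + ln 4 * n) / 2 ^ n"
      using ln_card(2) by (intro always_eventually allI divide_right_mono) simp_all
    show "(\<lambda>n. (ln 2 + ln 4 * n) / 2 ^ n :: real) \<longlonglongrightarrow> 0"
      by real_asymp
  qed
  then have "entropy B = ereal (0 / 2)"
    by (rule entropy_eq_half_limit)
  ultimately show ?thesis
    by (auto simp: zero_ereal_def)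
qed

theorem proposition3:
  fixes B :: "(nat \<times> nat \<times> nat) set" and R :: "real^2^2"
  assumes basic: "basic_set B"
    and dominate: "\<forall>n. acount B n \<ge> bcount B n"
    and essential: "\<exists>n. acount B n \<ge> 2"
    and R_inv: "invertible R" and R11: "R $ 1 $ 1 = 1"
    and R_diag: "((\<chi> i j. 1) :: real^2^2) = R ** ((\<chi> i j. if i = 1 \<and> j = 1 then 2 else 0) :: real^2^2) ** matrix_inv R"
  shows "F1 B 1 \<noteq> Some 0
    \<and> (F1 B 1 = Some 2 \<longrightarrow>
         (\<exists>L. (\<lambda>n. ln (real (acount B 1)) + (\<Sum>j=1..<n. (1/2) ^ j * ln (rr B 1 j))) \<longlonglongrightarrow> L
              \<and> entropy B = ereal (L / 4)))
    \<and> (F1 B 1 = Some 1 \<and> F1 B 2 = Some 1 \<longrightarrow>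
         (\<exists>L. (\<lambda>n. (matrix_inv R *v (\<chi> i. if i = 1 then ln (real (acount B 1)) else ln (real (bcount B 1)))) $ 1
                 + (\<Sum>j=1..<n. (1/2) ^ j *
                     (matrix_inv R *v (\<chi> i. if i = 1 then ln (rr B 1 j) else ln (rr B 2 j))) $ 1)) \<longlonglongrightarrow> L
              \<and> entropy B = ereal (L / 4)))
    \<and> (F1 B 1 = Some 1 \<and> F1 B 2 = Some 0 \<longrightarrow>
         (\<exists>c>0. \<forall>n\<ge>1. ln (real (card (blocks B n))) \<le> c * real n) \<and> entropy B = 0)"
  using dominant_essential_F1_ne_y_squared[OF basic dominate essential]
    entropy_leading_x_squared[OF basic dominate]
    entropy_leading_xy_xy[OF basic dominate R_inv R11 R_diag]
    entropy_leading_xy_y_squared[OF basic]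
  by blast

end
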